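(* In the transductive setting, assume $|y(x)|\le M$ for all $x\in X$. Let $W\in\mathbb{R}^{(m+u)\times(m+u)}$ be a symmetric nonnegative weight matrix with all row sums positive, $D$ the diagonal matrix with $D_{ii}=\sum_j W_{ij}$, $Q=I-D^{-1/2}WD^{-1/2}$, and $\mu>0$. For a training set $S$, let $y_S\in\mathbb{R}^{m+u}$ have $i$th entry $y(x_i)$ if $x_i\in S$ and $0$ otherwise, and let the Consistency Method return $h_S=(\mu^{-1}Q+I)^{-1}y_S$. Then for any two training sets $S,S'$ differing in exactly one point, $\|h_S-h_{S'}\|_\infty\le\sqrt2\,M$.
   Context: Transductive setting: fixed full sample $X=\{x_1,\dots,x_{m+u}\}$ with real labels $y(x)$; training set $S\subset X$ of size $m$ with labels revealed, test set $T=X\setminus S$ of size $u$. Two training sets $S,S'$ differ in exactly one point if $S'=(S\setminus\{x\})\cup\{x'\}$ with $x\in S$, $x'\in X\setminus S$. *)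

theory Defs
  imports "HOL-Analysis.Analysis"
begin

text \<open>The full sample X = {x_1,...,x_(m+u)} is indexed by a finite type 'n with
  CARD('n) = m + u; labels are a function y :: 'n => real; training sets are subsets S of 'n.\<close>

definition degree_mat :: "real^'n^'n \<Rightarrow> real^'n^'n" where
  "degree_mat W = (\<chi> i j. if i = j then (\<Sum>k\<in>UNIV. W $ i $ k) else 0)"

definition inv_sqrt_degree_mat :: "real^'n^'n \<Rightarrow> real^'n^'n" where
  "inv_sqrt_degree_mat W = (\<chi> i j. if i = j then 1 / sqrt (degree_mat W $ i $ i) else 0)"

definition norm_laplacian :: "real^'n^'n \<Rightarrow> real^'n^'n" where
  "norm_laplacian W = mat 1 - inv_sqrt_degree_mat W ** W ** inv_sqrt_degree_mat W"

definition train_labels :: "('n::finite \<Rightarrow> real) \<Rightarrow> 'n set \<Rightarrow> real^'n" where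
  "train_labels y S = (\<chi> i. if i \<in> S then y i else 0)"

definition consistency_method ::
  "real^'n^'n \<Rightarrow> real \<Rightarrow> ('n::finite \<Rightarrow> real) \<Rightarrow> 'n set \<Rightarrow> real^'n" where
  "consistency_method W \<mu> y S =
     matrix_inv ((1 / \<mu>) *\<^sub>R norm_laplacian W + mat 1) *v train_labels y S"

definition differ_in_one :: "'n set \<Rightarrow> 'n set \<Rightarrow> bool" where
  "differ_in_one S S' \<longleftrightarrow> (\<exists>x x'. x \<in> S \<and> x' \<notin> S \<and> S' = (S - {x}) \<union> {x'})"

end

theory Submission
  imports Defs
begin

(* Write A = (1/mu) Q + I, so that h_S = A^-1 y_S and, by linearity,
   h_S - h_S' = A^-1 (y_S - y_S').  The proof has three independent parts:
   (1) The normalized Laplacian Q = I - D^-1/2 W D^-1/2 is positive semidefinite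
       for a symmetric nonnegative W with positive degrees; this reduces, after the
       substitution w_i = z_i / sqrt d_i, to the inequality
       sum_ij W_ij w_i w_j <= sum_i d_i w_i^2, i.e. 2ab <= a^2 + b^2 summed with weights.
   (2) Hence z . A z >= |z|^2, and any matrix with this coercivity property is
       invertible with an inverse of Euclidean operator norm at most 1.
   (3) If S, S' differ in one point, y_S - y_S' has exactly two nonzero entries,
       each bounded by M, so its Euclidean norm is at most sqrt 2 * M.
   The theorem follows from  infnorm <= norm  and (2), (3). *)

text \<open>For a symmetric nonnegative weight matrix the quadratic form of W is dominated by
  the degree-weighted sum of squares: the weighted form of  2ab \<le> a^2 + b^2.\<close>
lemma weighted_quadratic_form_le_degree:
  fixes W :: "real^'n^'n" and w :: "'n \<Rightarrow> real"
  assumes sym: "\<And>i j. W $ i $ j = W $ j $ i" and nonneg: "\<And>i j. W $ i $ j \<ge> 0"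
  shows "(\<Sum>i\<in>UNIV. \<Sum>j\<in>UNIV. W $ i $ j * w i * w j)
           \<le> (\<Sum>i\<in>UNIV. (\<Sum>j\<in>UNIV. W $ i $ j) * (w i)\<^sup>2)"
proof -
  have pointwise: "W $ i $ j * w i * w j \<le> W $ i $ j * ((w i)\<^sup>2 + (w j)\<^sup>2) / 2" for i j
  proof -
    have "2 * (w i * w j) \<le> (w i)\<^sup>2 + (w j)\<^sup>2"
      using zero_le_power2[of "w i - w j"] by (simp add: power2_diff algebra_simps)
    from mult_left_mono[OF this nonneg[of i j]] show ?thesis by (simp add: algebra_simps)
  qed
  have swap: "(\<Sum>i\<in>UNIV. \<Sum>j\<in>UNIV. W $ i $ j * (w j)\<^sup>2)
                = (\<Sum>i\<in>UNIV. \<Sum>j\<in>UNIV. W $ i $ j * (w i)\<^sup>2)"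
    by (subst sum.swap) (simp add: sym)
  have "(\<Sum>i\<in>UNIV. \<Sum>j\<in>UNIV. W $ i $ j * w i * w j)
          \<le> (\<Sum>i\<in>UNIV. \<Sum>j\<in>UNIV. W $ i $ j * ((w i)\<^sup>2 + (w j)\<^sup>2) / 2)"
    by (intro sum_mono pointwise)
  also have "\<dots> = ((\<Sum>i\<in>UNIV. \<Sum>j\<in>UNIV. W $ i $ j * (w i)\<^sup>2)
                   + (\<Sum>i\<in>UNIV. \<Sum>j\<in>UNIV. W $ i $ j * (w j)\<^sup>2)) / 2"
    by (simp add: sum_divide_distrib[symmetric] sum.distrib[symmetric] algebra_simps)
  also have "\<dots> = (\<Sum>i\<in>UNIV. (\<Sum>j\<in>UNIV. W $ i $ j) * (w i)\<^sup>2)"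
    by (simp add: swap sum_distrib_right)
  finally show ?thesis .
qed

lemma inv_sqrt_degree_mat_mult:
  "inv_sqrt_degree_mat W *v v = (\<chi> i. v $ i / sqrt (\<Sum>k\<in>UNIV. W $ i $ k))"
  by (simp add: inv_sqrt_degree_mat_def degree_mat_def matrix_vector_mult_def vec_eq_iff
      if_distrib[where f="\<lambda>x. x * _"] sum.delta cong: if_cong)

lemma normalized_adjacency_form_le:
  fixes W :: "real^'n^'n" and z :: "real^'n"
  assumes sym: "transpose W = W" and nonneg: "\<And>i j. W $ i $ j \<ge> 0"
    and deg_pos: "\<And>i. (\<Sum>j\<in>UNIV. W $ i $ j) > 0"
  shows "z \<bullet> ((inv_sqrt_degree_mat W ** W ** inv_sqrt_degree_mat W) *v z) \<le> z \<bullet> z"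
proof -
  define d where "d i = (\<Sum>j\<in>UNIV. W $ i $ j)" for i
  define w where "w i = z $ i / sqrt (d i)" for i
  have sym': "W $ i $ j = W $ j $ i" for i j
    using sym by (metis transpose_def vec_lambda_beta)
  have "(inv_sqrt_degree_mat W ** W ** inv_sqrt_degree_mat W) *v z
          = inv_sqrt_degree_mat W *v (W *v (inv_sqrt_degree_mat W *v z))"
    by (simp add: matrix_vector_mul_assoc matrix_mul_assoc)
  also have "\<dots> = (\<chi> i. (\<Sum>j\<in>UNIV. W $ i $ j * w j) / sqrt (d i))"
    by (simp only: inv_sqrt_degree_mat_mult) (simp add: matrix_vector_mult_def w_def d_def)
  finally have "z \<bullet> ((inv_sqrt_degree_mat W ** W ** inv_sqrt_degree_mat W) *v z)
                  = (\<Sum>i\<in>UNIV. w i * (\<Sum>j\<in>UNIV. W $ i $ j * w j))"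
    by (simp add: inner_vec_def w_def)
  also have "\<dots> = (\<Sum>i\<in>UNIV. \<Sum>j\<in>UNIV. W $ i $ j * w i * w j)"
    by (simp add: sum_distrib_left algebra_simps)
  also have "\<dots> \<le> (\<Sum>i\<in>UNIV. d i * (w i)\<^sup>2)"
    unfolding d_def by (rule weighted_quadratic_form_le_degree[OF sym' nonneg])
  also have "\<dots> = z \<bullet> z"
  proof -
    have "d i * (w i)\<^sup>2 = z $ i * z $ i" for i
      using deg_pos[of i] by (simp add: w_def d_def power_divide power2_eq_square[symmetric])
    then show ?thesis by (simp add: inner_vec_def)
  qed
  finally show ?thesis .
qed

lemma norm_laplacian_psd:
  fixes W :: "real^'n^'n" and z :: "real^'n"
  assumes "transpose W = W" and "\<And>i j. W $ i $ j \<ge> 0"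
    and "\<And>i. (\<Sum>j\<in>UNIV. W $ i $ j) > 0"
  shows "0 \<le> z \<bullet> (norm_laplacian W *v z)"
  using normalized_adjacency_form_le[OF assms, of z]
  by (simp add: norm_laplacian_def matrix_vector_mult_diff_rdistrib inner_diff_right)

lemma psd_shift_coercive:
  fixes Q :: "real^'n^'n" and c :: real
  assumes psd: "\<And>z. 0 \<le> z \<bullet> (Q *v z)" and "c \<ge> 0"
  shows "z \<bullet> z \<le> z \<bullet> ((c *\<^sub>R Q + mat 1) *v z)"
proof -
  have "z \<bullet> ((c *\<^sub>R Q + mat 1) *v z) = c * (z \<bullet> (Q *v z)) + z \<bullet> z"
    by (simp add: matrix_vector_mult_add_rdistrib scaleR_matrix_vector_assoc[symmetric]
        inner_add_right)
  then show ?thesis using psd[of z] \<open>c \<ge> 0\<close> by simp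
qed

lemma coercive_invertible:
  fixes A :: "real^'n^'n"
  assumes coercive: "\<And>z. z \<bullet> z \<le> z \<bullet> (A *v z)"
  shows "invertible A"
proof -
  have "x = 0" if "A *v x = 0" for x
    using coercive[of x] that inner_ge_zero[of x] by simp
  then show ?thesis
    using matrix_left_invertible_ker invertible_left_inverse by blast
qed

lemma matrix_inv_right:
  fixes A :: "real^'n^'n"
  assumes "invertible A"
  shows "A ** matrix_inv A = mat 1"
  using assms unfolding matrix_inv_def invertible_def by (rule someI2_ex) auto

text \<open>The inverse of a coercive matrix does not increase Euclidean norms:
  |z|^2 \<le> z \<bullet> A z = z \<bullet> v \<le> |z| |v|  for  z = A^-1 v.\<close>
lemma coercive_inverse_norm_le:
  fixes A :: "real^'n^'n"
  assumes coercive: "\<And>z. z \<bullet> z \<le> z \<bullet> (A *v z)"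
  shows "norm (matrix_inv A *v v) \<le> norm v"
proof -
  define z where "z = matrix_inv A *v v"
  have "A *v z = v"
    using matrix_inv_right[OF coercive_invertible[OF coercive]]
    by (simp add: z_def matrix_vector_mul_assoc)
  moreover have "norm z * norm z = z \<bullet> z"
    by (simp add: dot_square_norm power2_eq_square)
  ultimately have "norm z * norm z \<le> z \<bullet> v"
    using coercive[of z] by simp
  also have "\<dots> \<le> norm z * norm v"
    by (rule norm_cauchy_schwarz)
  finally have "norm z * norm z \<le> norm z * norm v" .
  then show ?thesis
    unfolding z_def[symmetric] by (cases "z = 0") auto
qed

text \<open>If S and S' differ in one point, y_S - y_S' is supported on the two exchanged
  points, so its Euclidean norm is at most sqrt 2 times the label bound.\<close>
lemma train_labels_differ_in_one_norm:
  fixes y :: "'n::finite \<Rightarrow> real"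
  assumes bound: "\<And>i. \<bar>y i\<bar> \<le> M" and "differ_in_one S S'"
  shows "norm (train_labels y S - train_labels y S') \<le> sqrt 2 * M"
proof -
  obtain x x' where x: "x \<in> S" and x': "x' \<notin> S" and S': "S' = (S - {x}) \<union> {x'}"
    using \<open>differ_in_one S S'\<close> unfolding differ_in_one_def by blast
  have "x \<noteq> x'" using x x' by auto
  define v where "v = train_labels y S - train_labels y S'"
  have v: "v = (\<chi> i. if i = x then y x else if i = x' then - y x' else 0)"
    unfolding v_def train_labels_def vec_eq_iff using x x' \<open>x \<noteq> x'\<close> by (simp add: S')
  have "(norm v)\<^sup>2 = (\<Sum>i\<in>{x, x'}. v $ i * v $ i)"
    unfolding power2_norm_eq_inner inner_vec_def inner_real_def
    by (rule sum.mono_neutral_right) (auto simp: v)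
  also have "\<dots> = (y x)\<^sup>2 + (y x')\<^sup>2"
    using \<open>x \<noteq> x'\<close> by (simp add: v power2_eq_square)
  also have "\<dots> \<le> M\<^sup>2 + M\<^sup>2"
    using power_mono[OF bound abs_ge_zero, of _ 2] by (intro add_mono) simp_all
  also have "\<dots> = (sqrt 2 * M)\<^sup>2"
    by (simp add: power_mult_distrib)
  finally have "(norm v)\<^sup>2 \<le> (sqrt 2 * M)\<^sup>2" .
  moreover have "0 \<le> sqrt 2 * M"
    using bound[of x] by simp
  ultimately show ?thesis
    unfolding v_def by (rule power2_le_imp_le)
qed

theorem mainTheorem9:
  fixes W :: "real^'n^'n" and y :: "'n \<Rightarrow> real" and M \<mu> :: real and S S' :: "'n set"
  assumes "\<And>i. \<bar>y i\<bar> \<le> M"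
    and "transpose W = W"
    and "\<And>i j. W $ i $ j \<ge> 0"
    and "\<And>i. (\<Sum>j\<in>UNIV. W $ i $ j) > 0"
    and "\<mu> > 0"
    and "differ_in_one S S'"
  shows "infnorm (consistency_method W \<mu> y S - consistency_method W \<mu> y S') \<le> sqrt 2 * M"
proof -
  define A where "A = (1 / \<mu>) *\<^sub>R norm_laplacian W + mat 1"
  define v where "v = train_labels y S - train_labels y S'"
  have coercive: "z \<bullet> z \<le> z \<bullet> (A *v z)" for z
    unfolding A_def using \<open>\<mu> > 0\<close>
    by (intro psd_shift_coercive norm_laplacian_psd[OF assms(2-4)]) simp
  have "consistency_method W \<mu> y S - consistency_method W \<mu> y S' = matrix_inv A *v v"
    by (simp add: consistency_method_def A_def[symmetric] v_def matrix_vector_mult_diff_distrib)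
  then have "infnorm (consistency_method W \<mu> y S - consistency_method W \<mu> y S')
               \<le> norm (matrix_inv A *v v)"
    by (simp add: infnorm_le_norm)
  also have "\<dots> \<le> norm v"
    by (rule coercive_inverse_norm_le[OF coercive])
  also have "\<dots> \<le> sqrt 2 * M"
    unfolding v_def by (rule train_labels_differ_in_one_norm[OF assms(1,6)])
  finally show ?thesis .
qed

end
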